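(* Let $i,j\in[n]$ with $i\ne j$, $m\in[n-1]$, $\delta\ge0$ real and $r,t\ge0$ integers. Then $$\mathcal{P}^{n,t}_{1,m+1}\big([n]\times\overline{j\pm\delta}\big)\le\mathbb{P}^{n-1}_{id}\big(\Pi_t(1)>r\,\big|\,1\in A^t\big)+\mathbb{P}^{n-1}_{id}\big(\Pi_t(m)\in\overline{j\pm(\delta+r)}\,\big|\,m\in A^t\big).$$
   Context: The random-to-random insertions shuffle on a deck of $N$ cards numbered $1,\dots,N$: at each step a card is chosen uniformly at random, removed, and reinserted at a uniformly random position. Orderings are identified with $\sigma\in S_N$, $\sigma(k)$ being the position of card $k$; $\Pi_t$ is the induced random walk on $S_N$ and $\mathbb{P}^N_\sigma$ its law started at $\sigma$. $A^t$ is the (random) set of cards not chosen for removal in the first $t$ shuffles. For $k$ and $M\ge0$, $\overline{k\pm M}=[n]\cap[k-M,k+M]$. Fix distinct $i,j\in[n]$. For $m_1\in[n-1]$, $m_2\in[n]$ and an integer $t\ge0$, let $\sigma\in S_n$ be any permutation with $\sigma(j)=m_2$ and $\sigma(i)=m_1+1$ if $m_2\le m_1$, $\sigma(i)=m_1$ if $m_2>m_1$; define the probability measure on $[n]\times[n]$ $$\mathcal{P}^{n,t}_{m_1,m_2}(\cdot)=\mathbb{P}^n_\sigma\big((\Pi_t(i),\Pi_t(j))\in\cdot\,\big|\,i,j\in A^t\big),$$ which does not depend on the choice of $\sigma$ beyond $\sigma(i),\sigma(j)$. *)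

theory Defs
  imports "HOL-Probability.Probability"
begin

text \<open>A state is a permutation sigma (sigma permutes {1..N}), sigma k = position of card k.
  One shuffle step is given by a pair (c, q): card c is removed and reinserted so that
  it ends up at position q; both c and q are uniform in {1..N}, independently.\<close>

definition shuffle_step :: "(nat \<Rightarrow> nat) \<Rightarrow> nat \<times> nat \<Rightarrow> (nat \<Rightarrow> nat)" where
  "shuffle_step \<sigma> cq = (\<lambda>k. if k = fst cq then snd cq
      else (let p' = (if \<sigma> k > \<sigma> (fst cq) then \<sigma> k - 1 else \<sigma> k)
            in if p' \<ge> snd cq then p' + 1 else p'))"

definition run_shuffle :: "(nat \<Rightarrow> nat) \<Rightarrow> (nat \<times> nat) list \<Rightarrow> (nat \<Rightarrow> nat)" where
  "run_shuffle \<sigma> xs = fold (\<lambda>x s. shuffle_step s x) xs \<sigma>"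

definition shuffle_paths :: "nat \<Rightarrow> nat \<Rightarrow> (nat \<times> nat) list set" where
  "shuffle_paths N t = {xs. length xs = t \<and> set xs \<subseteq> {1..N} \<times> {1..N}}"

definition shuffle_law :: "nat \<Rightarrow> nat \<Rightarrow> (nat \<times> nat) list pmf" where
  "shuffle_law N t = pmf_of_set (shuffle_paths N t)"

text \<open>A^t: cards never chosen for removal during the shuffles xs.\<close>
definition unchosen :: "nat \<Rightarrow> (nat \<times> nat) list \<Rightarrow> nat set" where
  "unchosen N xs = {1..N} - fst ` set xs"

text \<open>P^N_sigma(Pi_t satisfies P | B subset A^t)  (elementary conditional probability).\<close>
definition cond_shuffle_prob ::
  "nat \<Rightarrow> nat \<Rightarrow> (nat \<Rightarrow> nat) \<Rightarrow> ((nat \<Rightarrow> nat) \<Rightarrow> bool) \<Rightarrow> nat set \<Rightarrow> real" where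
  "cond_shuffle_prob N t \<sigma> P B =
     measure_pmf.prob (shuffle_law N t) {xs. P (run_shuffle \<sigma> xs) \<and> B \<subseteq> unchosen N xs}
     / measure_pmf.prob (shuffle_law N t) {xs. B \<subseteq> unchosen N xs}"

text \<open>overline(k +- M) = [N] intersect [k-M, k+M].\<close>
definition nbhd :: "nat \<Rightarrow> nat \<Rightarrow> real \<Rightarrow> nat set" where
  "nbhd N k M = {x \<in> {1..N}. \<bar>real x - real k\<bar> \<le> M}"

text \<open>The measure script-P^{n,t}_{m1,m2} (for fixed distinct cards i, j), using a starting
  permutation sigma with sigma j = m2 and sigma i = m1+1 if m2 <= m1, sigma i = m1 otherwise.\<close>
definition start_perm :: "nat \<Rightarrow> nat \<Rightarrow> nat \<Rightarrow> nat \<Rightarrow> nat \<Rightarrow> (nat \<Rightarrow> nat)" where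
  "start_perm n i j m1 m2 = (SOME \<sigma>. \<sigma> permutes {1..n} \<and> \<sigma> j = m2 \<and>
      \<sigma> i = (if m2 \<le> m1 then m1 + 1 else m1))"

definition Pcal :: "nat \<Rightarrow> nat \<Rightarrow> nat \<Rightarrow> nat \<Rightarrow> nat \<Rightarrow> nat \<Rightarrow> (nat \<times> nat) set \<Rightarrow> real" where
  "Pcal n t i j m1 m2 S =
     cond_shuffle_prob n t (start_perm n i j m1 m2) (\<lambda>\<pi>. (\<pi> i, \<pi> j) \<in> S) {i, j}"

end

theory Submission
  imports Defs
begin

text \<open>Conditioned on two cards never being removed, the law of their positions (x, y) obeys
  an explicit recursion in t, and so does the law of a single such card. Card i starts at the
  top and card j at m + 1, so x < y throughout. We couple (x, y) with two independent
  single-card chains on n - 1 cards, card 1 at position w and card m at position z, keeping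
  y - x \<le> z < y and x \<le> w. If y is within \<delta> of j and w \<le> r then, as 0 < y - z \<le> x \<le> w,
  z is within \<delta> + r of j. A removal among the n - 2 other positions is matched with removals
  in the small decks preserving both marginals; of the n insertion slots, slot x is spare for
  the z-chain and slot n for the w-chain, and a spare slot is averaged out by convexity.\<close>

definition remove_pos :: "nat \<Rightarrow> nat \<Rightarrow> nat" where
  "remove_pos v p = (if p < v then v - 1 else v)"

definition insert_pos :: "nat \<Rightarrow> nat \<Rightarrow> nat" where
  "insert_pos v q = (if q \<le> v then v + 1 else v)"

definition move_pos :: "nat \<Rightarrow> nat \<Rightarrow> nat \<Rightarrow> nat" where
  "move_pos v p q = insert_pos (remove_pos v p) q"

lemma shuffle_step_other: "k \<noteq> c \<Longrightarrow> shuffle_step \<sigma> (c, q) k = move_pos (\<sigma> k) (\<sigma> c) q"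
  by (simp add: shuffle_step_def move_pos_def remove_pos_def insert_pos_def Let_def)

lemma bij_betw_shuffle_step:
  assumes \<sigma>: "bij_betw \<sigma> {1..N} {1..N}" and c: "c \<in> {1..N}" and q: "q \<in> {1..N}"
  shows "bij_betw (shuffle_step \<sigma> (c, q)) {1..N} {1..N}"
proof -
  let ?f = "shuffle_step \<sigma> (c, q)"
  have inj: "inj_on \<sigma> {1..N}" and im: "\<sigma> ` {1..N} = {1..N}"
    using \<sigma> by (auto simp: bij_betw_def)
  have \<sigma>_in: "\<sigma> k \<in> {1..N}" if "k \<in> {1..N}" for k
    using im that by auto
  have \<sigma>_ne: "\<sigma> k \<noteq> \<sigma> c" if "k \<in> {1..N}" "k \<noteq> c" for k
    using inj that c by (auto dest: inj_onD)
  have "?f ` {1..N} \<subseteq> {1..N}"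
  proof (rule image_subsetI)
    fix k assume k: "k \<in> {1..N}"
    show "?f k \<in> {1..N}"
    proof (cases "k = c")
      case True
      then show ?thesis using q by (simp add: shuffle_step_def)
    next
      case False
      then show ?thesis
        using \<sigma>_in[OF k] \<sigma>_in[OF c] \<sigma>_ne[OF k] q by (auto simp: shuffle_step_def Let_def)
    qed
  qed
  moreover have "inj_on ?f {1..N}"
  proof (rule inj_onI, rule ccontr)
    fix a b assume a: "a \<in> {1..N}" and b: "b \<in> {1..N}" and eq: "?f a = ?f b" and ne: "a \<noteq> b"
    have "\<sigma> a \<noteq> \<sigma> b" using inj a b ne by (auto dest: inj_onD)
    then show False
      using eq ne \<sigma>_ne[OF a] \<sigma>_ne[OF b] \<sigma>_in[OF a] \<sigma>_in[OF b] \<sigma>_in[OF c]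
      by (auto simp: shuffle_step_def Let_def split: if_splits)
  qed
  ultimately show ?thesis by (simp add: bij_betw_def endo_inj_surj)
qed

definition avoiding_paths :: "nat \<Rightarrow> nat set \<Rightarrow> nat \<Rightarrow> (nat \<times> nat) list set" where
  "avoiding_paths N B t = {xs. set xs \<subseteq> ({1..N} - B) \<times> {1..N} \<and> length xs = t}"

definition avoiding_prob ::
  "nat \<Rightarrow> nat set \<Rightarrow> ((nat \<Rightarrow> nat) \<Rightarrow> bool) \<Rightarrow> nat \<Rightarrow> (nat \<Rightarrow> nat) \<Rightarrow> real" where
  "avoiding_prob N B Q t \<sigma> =
     card {xs \<in> avoiding_paths N B t. Q (run_shuffle \<sigma> xs)} / card (avoiding_paths N B t)"

lemma finite_avoiding_paths: "finite (avoiding_paths N B t)"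
  unfolding avoiding_paths_def by (rule finite_lists_length_eq) auto

lemma card_avoiding_paths: "card (avoiding_paths N B t) = card (({1..N} - B) \<times> {1..N}) ^ t"
  unfolding avoiding_paths_def by (rule card_lists_length_eq) auto

lemma card_avoiding_paths_Suc_filter:
  "card {xs \<in> avoiding_paths N B (Suc t). P xs} =
     (\<Sum>x\<in>({1..N} - B) \<times> {1..N}. card {xs \<in> avoiding_paths N B t. P (x # xs)})"
proof -
  let ?S = "SIGMA x:({1..N} - B) \<times> {1..N}. {xs \<in> avoiding_paths N B t. P (x # xs)}"
  have "{xs \<in> avoiding_paths N B (Suc t). P xs} = (\<lambda>(x, xs). x # xs) ` ?S"
    by (auto simp: avoiding_paths_def length_Suc_conv image_iff)
  moreover have "inj_on (\<lambda>(x, xs). x # xs) ?S"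
    by (auto simp: inj_on_def)
  ultimately show ?thesis
    by (simp add: card_image card_SigmaI finite_avoiding_paths)
qed

lemma avoiding_prob_Suc:
  "avoiding_prob N B Q (Suc t) \<sigma> =
     (\<Sum>x\<in>({1..N} - B) \<times> {1..N}. avoiding_prob N B Q t (shuffle_step \<sigma> x))
       / card (({1..N} - B) \<times> {1..N})"
proof -
  let ?X = "({1..N} - B) \<times> {1..N}"
  let ?c = "\<lambda>x. real (card {xs \<in> avoiding_paths N B t. Q (run_shuffle (shuffle_step \<sigma> x) xs)})"
  have "avoiding_prob N B Q (Suc t) \<sigma> = (\<Sum>x\<in>?X. ?c x) / (real (card ?X) * real (card ?X) ^ t)"
    using card_avoiding_paths_Suc_filter[of N B t "\<lambda>xs. Q (run_shuffle \<sigma> xs)"]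
    by (simp add: avoiding_prob_def card_avoiding_paths run_shuffle_def)
  also have "\<dots> = (\<Sum>x\<in>?X. ?c x / real (card ?X) ^ t) / real (card ?X)"
    by (simp add: sum_divide_distrib field_simps)
  finally show ?thesis
    by (simp add: avoiding_prob_def card_avoiding_paths)
qed

lemma cond_shuffle_prob_eq_avoiding_prob:
  assumes "N \<ge> 1" and "B \<subseteq> {1..N}"
  shows "cond_shuffle_prob N t \<sigma> Q B = avoiding_prob N B Q t \<sigma>"
proof -
  let ?S = "shuffle_paths N t"
  have fin: "finite ?S"
    using finite_lists_length_eq[of "{1..N} \<times> {1..N}" t]
    by (simp add: shuffle_paths_def conj_commute)
  have "replicate t (1, 1) \<in> ?S" using assms by (auto simp: shuffle_paths_def)
  then have ne: "?S \<noteq> {}" by auto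
  have avoid: "?S \<inter> {xs. B \<subseteq> unchosen N xs} = avoiding_paths N B t"
    using assms(2) by (auto simp: shuffle_paths_def avoiding_paths_def unchosen_def; force)
  have event: "?S \<inter> {xs. Q (run_shuffle \<sigma> xs) \<and> B \<subseteq> unchosen N xs}
      = {xs \<in> avoiding_paths N B t. Q (run_shuffle \<sigma> xs)}"
    using assms(2) by (auto simp: shuffle_paths_def avoiding_paths_def unchosen_def; force)
  have "card ?S > 0" using fin ne by (simp add: card_gt_0_iff)
  then show ?thesis
    unfolding cond_shuffle_prob_def shuffle_law_def
    by (simp add: measure_pmf_of_set[OF ne fin] avoid event avoiding_prob_def)
qed

fun pair_prob :: "nat \<Rightarrow> (nat \<Rightarrow> nat \<Rightarrow> bool) \<Rightarrow> nat \<Rightarrow> nat \<Rightarrow> nat \<Rightarrow> real" where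
  "pair_prob N P 0 x y = (if P x y then 1 else 0)"
| "pair_prob N P (Suc t) x y =
     (\<Sum>p\<in>{1..N} - {x, y}. \<Sum>q\<in>{1..N}. pair_prob N P t (move_pos x p q) (move_pos y p q))
       / (real (card ({1..N} - {x, y})) * real N)"

text \<open>On the diagonal x = y the pair chain is the single-card chain, since {v, v} = {v}.\<close>

definition single_prob :: "nat \<Rightarrow> (nat \<Rightarrow> bool) \<Rightarrow> nat \<Rightarrow> nat \<Rightarrow> real" where
  "single_prob N P t v = pair_prob N (\<lambda>x _. P x) t v v"

lemma pair_prob_nonneg: "pair_prob N P t x y \<ge> 0"
  by (induction t arbitrary: x y) (auto intro!: sum_nonneg divide_nonneg_nonneg)

lemma single_prob_0: "single_prob N P 0 v = (if P v then 1 else 0)"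
  by (simp add: single_prob_def)

lemma single_prob_Suc:
  "single_prob N P (Suc t) v =
     (\<Sum>p\<in>{1..N} - {v}. \<Sum>q\<in>{1..N}. single_prob N P t (move_pos v p q))
       / (real (card ({1..N} - {v})) * real N)"
  by (simp add: single_prob_def)

lemma avoiding_prob_eq_pair_prob:
  assumes "{i, j} \<subseteq> {1..N}"
  shows "bij_betw \<sigma> {1..N} {1..N} \<Longrightarrow>
    avoiding_prob N {i, j} (\<lambda>\<pi>. P (\<pi> i) (\<pi> j)) t \<sigma> = pair_prob N P t (\<sigma> i) (\<sigma> j)"
proof (induction t arbitrary: \<sigma>)
  case 0
  have "avoiding_paths N {i, j} 0 = {[]}" by (auto simp: avoiding_paths_def)
  moreover have "{xs \<in> avoiding_paths N {i, j} 0. P (run_shuffle \<sigma> xs i) (run_shuffle \<sigma> xs j)}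
      = (if P (\<sigma> i) (\<sigma> j) then {[]} else {})"
    by (auto simp: avoiding_paths_def run_shuffle_def)
  ultimately show ?case by (simp add: avoiding_prob_def)
next
  case (Suc t)
  let ?C = "{1..N} - {i, j}"
  let ?f = "\<lambda>p. \<Sum>q\<in>{1..N}. pair_prob N P t (move_pos (\<sigma> i) p q) (move_pos (\<sigma> j) p q)"
  have bij: "inj_on \<sigma> {1..N}" "\<sigma> ` {1..N} = {1..N}"
    using Suc.prems by (auto simp: bij_betw_def)
  have inj: "inj_on \<sigma> ?C"
    using bij(1) by (rule inj_on_subset) auto
  have im: "\<sigma> ` ?C = {1..N} - {\<sigma> i, \<sigma> j}"
    using inj_on_image_set_diff[OF bij(1), of "{1..N}" "{i, j}"] bij(2) assms by auto
  have step_bij: "bij_betw (shuffle_step \<sigma> x) {1..N} {1..N}" if "x \<in> ?C \<times> {1..N}" for x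
    using that bij_betw_shuffle_step[OF Suc.prems] by (cases x) auto
  have "avoiding_prob N {i, j} (\<lambda>\<pi>. P (\<pi> i) (\<pi> j)) (Suc t) \<sigma> =
      (\<Sum>x\<in>?C \<times> {1..N}. pair_prob N P t (shuffle_step \<sigma> x i) (shuffle_step \<sigma> x j))
        / card (?C \<times> {1..N})"
    unfolding avoiding_prob_Suc
    by (intro arg_cong2[where f = "(/)"] sum.cong refl Suc.IH step_bij)
  also have "\<dots> = (\<Sum>c\<in>?C. ?f (\<sigma> c)) / card (?C \<times> {1..N})"
    unfolding sum.cartesian_product'
    by (intro arg_cong2[where f = "(/)"] sum.cong refl) (auto simp: shuffle_step_other)
  also have "\<dots> = pair_prob N P (Suc t) (\<sigma> i) (\<sigma> j)"
    using sum.reindex[OF inj, of ?f] card_image[OF inj] im by (simp add: card_cartesian_product)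
  finally show ?case .
qed

lemma cond_shuffle_prob_eq_pair_prob:
  assumes "{i, j} \<subseteq> {1..N}" and "\<sigma> permutes {1..N}"
  shows "cond_shuffle_prob N t \<sigma> (\<lambda>\<pi>. P (\<pi> i) (\<pi> j)) {i, j} = pair_prob N P t (\<sigma> i) (\<sigma> j)"
  using assms cond_shuffle_prob_eq_avoiding_prob[of N "{i, j}"]
    avoiding_prob_eq_pair_prob permutes_imp_bij by fastforce

lemma cond_shuffle_prob_eq_single_prob:
  assumes "k \<in> {1..N}" and "\<sigma> permutes {1..N}"
  shows "cond_shuffle_prob N t \<sigma> (\<lambda>\<pi>. P (\<pi> k)) {k} = single_prob N P t (\<sigma> k)"
  using cond_shuffle_prob_eq_pair_prob[of k k N \<sigma> t "\<lambda>x _. P x"] assms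
  by (simp add: single_prob_def)

lemma sum_insert_pos:
  assumes "v \<le> N"
  shows "(\<Sum>q\<in>{1..N}. f (insert_pos v q)) = real v * f (v + 1) + real (N - v) * (f v :: real)"
proof -
  have "{1..N} = {1..v} \<union> {v+1..N}" using assms by auto
  then have "(\<Sum>q\<in>{1..N}. f (insert_pos v q)) =
      (\<Sum>q\<in>{1..v}. f (insert_pos v q)) + (\<Sum>q\<in>{v+1..N}. f (insert_pos v q))"
    by (simp add: sum.union_disjoint)
  also have "\<dots> = (\<Sum>q\<in>{1..v}. f (v + 1)) + (\<Sum>q\<in>{v+1..N}. f v)"
    by (intro arg_cong2[where f = "(+)"] sum.cong) (auto simp: insert_pos_def)
  finally show ?thesis by simp
qed

lemma sum_remove_pos:
  assumes "v \<in> {1..N}"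
  shows "(\<Sum>p\<in>{1..N} - {v}. f (remove_pos v p)) = real (v - 1) * f (v - 1) + real (N - v) * (f v :: real)"
proof -
  have "{1..N} - {v} = {1..v-1} \<union> {v+1..N}" using assms by auto
  then have "(\<Sum>p\<in>{1..N} - {v}. f (remove_pos v p)) =
      (\<Sum>p\<in>{1..v-1}. f (remove_pos v p)) + (\<Sum>p\<in>{v+1..N}. f (remove_pos v p))"
    by (simp add: sum.union_disjoint)
  also have "\<dots> = (\<Sum>p\<in>{1..v-1}. f (v - 1)) + (\<Sum>p\<in>{v+1..N}. f v)"
    by (intro arg_cong2[where f = "(+)"] sum.cong) (auto simp: remove_pos_def)
  finally show ?thesis using assms by simp
qed

lemma sum_if_mem:
  assumes "finite S" and "E \<subseteq> S"
  shows "(\<Sum>p\<in>S. f (if p \<in> E then a else b)) =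
    real (card E) * f a + real (card S - card E) * (f b :: real)"
proof -
  have parts: "S \<inter> E = E" "S \<inter> - E = S - E"
    using assms(2) by auto
  have "(\<Sum>p\<in>S. f (if p \<in> E then a else b)) = (\<Sum>p\<in>S. if p \<in> E then f a else f b)"
    by (rule sum.cong) auto
  also have "\<dots> = (\<Sum>p\<in>E. f a) + (\<Sum>p\<in>S - E. f b)"
    using sum.If_cases[OF assms(1), of "\<lambda>p. p \<in> E" "\<lambda>_. f a" "\<lambda>_. f b"] parts by simp
  finally show ?thesis
    using assms by (simp add: card_Diff_subset finite_subset)
qed

lemma sum_if_eq_if_mem:
  assumes "finite A" and "a \<in> A" and "D \<subseteq> A - {a}"
  shows "(\<Sum>q\<in>A. if q = a then c else f (if q \<in> D then u else v)) =
    c + real (card D) * f u + real (card A - 1 - card D) * (f v :: real)"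
proof -
  have "(\<Sum>q\<in>A. if q = a then c else f (if q \<in> D then u else v)) =
      c + (\<Sum>q\<in>A - {a}. if q = a then c else f (if q \<in> D then u else v))"
    using assms by (simp add: sum.remove)
  also have "(\<Sum>q\<in>A - {a}. if q = a then c else f (if q \<in> D then u else v)) =
      (\<Sum>q\<in>A - {a}. f (if q \<in> D then u else v))"
    by (rule sum.cong) auto
  finally show ?thesis
    using sum_if_mem[of "A - {a}" D f u v] assms by simp
qed

definition insert_avg :: "nat \<Rightarrow> (nat \<Rightarrow> real) \<Rightarrow> nat \<Rightarrow> real" where
  "insert_avg N f v = (\<Sum>q\<in>{1..N}. f (insert_pos v q)) / real N"

lemma insert_avg_eq:
  "v \<le> N \<Longrightarrow> insert_avg N f v = (real v * f (v + 1) + real (N - v) * f v) / real N"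
  using sum_insert_pos[of v N f] by (simp add: insert_avg_def)

lemma single_prob_Suc_eq:
  assumes "v \<in> {1..N}"
  shows "real (N - 1) * single_prob N P (Suc t) v =
    real (v - 1) * insert_avg N (single_prob N P t) (v - 1)
      + real (N - v) * insert_avg N (single_prob N P t) v"
proof -
  let ?K = "insert_avg N (single_prob N P t)"
  have "(\<Sum>q\<in>{1..N}. single_prob N P t (move_pos v p q)) = real N * ?K (remove_pos v p)" for p
    using assms by (simp add: insert_avg_def move_pos_def)
  then have "single_prob N P (Suc t) v = (\<Sum>p\<in>{1..N} - {v}. ?K (remove_pos v p)) / real (N - 1)"
    using assms by (simp add: single_prob_Suc sum_distrib_left[symmetric])
  then show ?thesis
    using assms sum_remove_pos[OF assms, of ?K] by (cases "N = 1") auto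
qed

lemma le_convex_combination:
  fixes a u v g :: real
  assumes "a \<le> u + g" and "a \<le> v + g" and "k \<le> N" and "0 < N"
  shows "a \<le> (real k * u + real (N - k) * v) / real N + g"
proof -
  have "real N * (a - g) = real k * (a - g) + real (N - k) * (a - g)"
    using assms(3) by (simp add: of_nat_diff algebra_simps)
  also have "\<dots> \<le> real k * u + real (N - k) * v"
    using assms by (intro add_mono mult_left_mono) auto
  finally show ?thesis using assms(4) by (simp add: field_simps)
qed

definition coupled_positions :: "nat \<Rightarrow> nat \<Rightarrow> nat \<Rightarrow> nat \<Rightarrow> nat \<Rightarrow> bool" where
  "coupled_positions n x y z w \<longleftrightarrow>
     1 \<le> x \<and> x < y \<and> y \<le> n \<and> y - x \<le> z \<and> z < y \<and> x \<le> w \<and> w \<le> n - 1"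

text \<open>Removal positions of the big deck matched with removals below z (resp. w) in the small
  deck; there are z - 1 (resp. w - 1) of them, as in the small deck.\<close>

definition z_drop_set :: "nat \<Rightarrow> nat \<Rightarrow> nat \<Rightarrow> nat set" where
  "z_drop_set x y z = {x<..<y} \<union> {1..z + x - y}"

definition w_drop_set :: "nat \<Rightarrow> nat \<Rightarrow> nat \<Rightarrow> nat set" where
  "w_drop_set x y w = (if w < y then {1..w} - {x} else {1..w + 1} - {x, y})"

text \<open>Insertion slots of the big deck, other than x, matched with slots at or below z in the
  small deck, which raise z.\<close>

definition z_raise_set :: "nat \<Rightarrow> nat \<Rightarrow> nat \<Rightarrow> nat set" where
  "z_raise_set x y z = {x<..y} \<union> {1..z + x - y}"

lemma coupled_positions_remove:
  assumes "coupled_positions n x y z w" and "p \<in> {1..n} - {x, y}"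
  shows "coupled_positions (n - 1) (remove_pos x p) (remove_pos y p)
    (if p \<in> z_drop_set x y z then z - 1 else z) (if p \<in> w_drop_set x y w then w - 1 else w)"
proof -
  have c: "1 \<le> x" "x < y" "y \<le> n" "y - x \<le> z" "z < y" "x \<le> w" "w \<le> n - 1"
    using assms(1) by (auto simp: coupled_positions_def)
  have p: "1 \<le> p" "p \<le> n" "p \<noteq> x" "p \<noteq> y"
    using assms(2) by auto
  consider "p < x" | "x < p" "p < y" | "y < p"
    using p by linarith
  then show ?thesis
    by cases (use c p in \<open>auto simp: coupled_positions_def remove_pos_def z_drop_set_def w_drop_set_def\<close>)
qed

lemma coupled_positions_insert:
  assumes "coupled_positions (n - 1) x y z w" and "q \<in> {1..n}"
    and "zz \<in> {z, z + 1}" and "q \<noteq> x \<Longrightarrow> zz = (if q \<in> z_raise_set x y z then z + 1 else z)"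
    and "ww \<in> {w, w + 1}" and "q \<noteq> n \<Longrightarrow> ww = (if q \<in> {1..w} then w + 1 else w)"
  shows "coupled_positions n (insert_pos x q) (insert_pos y q) zz ww"
proof -
  have c: "1 \<le> x" "x < y" "y \<le> n - 1" "y - x \<le> z" "z < y" "x \<le> w" "w \<le> n - 2"
    using assms(1) by (auto simp: coupled_positions_def)
  have w: "insert_pos x q \<le> ww \<and> ww \<le> n - 1"
    using c assms(2,5,6) by (auto simp: insert_pos_def)
  consider "q < x" | "q = x" | "x < q" "q \<le> y" | "y < q"
    by linarith
  then have "1 \<le> insert_pos x q \<and> insert_pos x q < insert_pos y q \<and> insert_pos y q \<le> n \<and>
      insert_pos y q - insert_pos x q \<le> zz \<and> zz < insert_pos y q"
    by cases (use c assms(2-4) in \<open>auto simp: insert_pos_def z_raise_set_def\<close>)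
  with w show ?thesis
    by (simp add: coupled_positions_def)
qed

lemma card_z_drop_set:
  assumes "coupled_positions n x y z w"
  shows "z_drop_set x y z \<subseteq> {1..n} - {x, y}" and "card (z_drop_set x y z) = z - 1"
proof -
  show "z_drop_set x y z \<subseteq> {1..n} - {x, y}"
    using assms by (auto simp: coupled_positions_def z_drop_set_def)
  have "card (z_drop_set x y z) = card {x<..<y} + card {1..z + x - y}"
    unfolding z_drop_set_def using assms by (intro card_Un_disjoint) (auto simp: coupled_positions_def)
  then show "card (z_drop_set x y z) = z - 1"
    using assms unfolding coupled_positions_def by simp linarith
qed

lemma card_w_drop_set:
  assumes "coupled_positions n x y z w"
  shows "w_drop_set x y w \<subseteq> {1..n} - {x, y}" and "card (w_drop_set x y w) = w - 1"
  using assms by (auto simp: coupled_positions_def w_drop_set_def card_Diff_subset)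

lemma card_z_raise_set:
  assumes "coupled_positions (n - 1) x y z w"
  shows "z_raise_set x y z \<subseteq> {1..n} - {x}" and "card (z_raise_set x y z) = z"
proof -
  show "z_raise_set x y z \<subseteq> {1..n} - {x}"
    using assms by (auto simp: coupled_positions_def z_raise_set_def)
  have "card (z_raise_set x y z) = card {x<..y} + card {1..z + x - y}"
    unfolding z_raise_set_def using assms by (intro card_Un_disjoint) (auto simp: coupled_positions_def)
  then show "card (z_raise_set x y z) = z"
    using assms unfolding coupled_positions_def by simp linarith
qed

lemma sum_z_drop:
  assumes "coupled_positions n x y z w"
  shows "(\<Sum>p\<in>{1..n} - {x, y}. f (if p \<in> z_drop_set x y z then z - 1 else z)) =
    real (z - 1) * f (z - 1) + real (n - 1 - z) * (f z :: real)"
proof -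
  have "1 \<le> z" using assms by (auto simp: coupled_positions_def)
  then have "card ({1..n} - {x, y}) - card (z_drop_set x y z) = n - 1 - z"
    using card_z_drop_set(2)[OF assms] assms by (simp add: coupled_positions_def card_Diff_subset)
  then show ?thesis
    using sum_if_mem[OF _ card_z_drop_set(1)[OF assms], of f] card_z_drop_set(2)[OF assms] by simp
qed

lemma sum_w_drop:
  assumes "coupled_positions n x y z w"
  shows "(\<Sum>p\<in>{1..n} - {x, y}. f (if p \<in> w_drop_set x y w then w - 1 else w)) =
    real (w - 1) * f (w - 1) + real (n - 1 - w) * (f w :: real)"
proof -
  have "card ({1..n} - {x, y}) - card (w_drop_set x y w) = n - 1 - w"
    using card_w_drop_set(2)[OF assms] assms by (simp add: coupled_positions_def card_Diff_subset)
  then show ?thesis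
    using sum_if_mem[OF _ card_w_drop_set(1)[OF assms], of f] card_w_drop_set(2)[OF assms] by simp
qed

text \<open>In the pointwise bound below, slot x of the big deck is matched with a uniformly random
  slot for z and slot n with a uniformly random slot for w.\<close>

lemma insertion_coupling_pointwise:
  assumes c: "coupled_positions (n - 1) x y z w" and q: "q \<in> {1..n}"
    and hyp: "\<And>x y z w. coupled_positions n x y z w \<Longrightarrow> F x y \<le> G w + H z"
  shows "F (insert_pos x q) (insert_pos y q) \<le>
    (if q = x then insert_avg (n - 1) H z else H (if q \<in> z_raise_set x y z then z + 1 else z))
    + (if q = n then insert_avg (n - 1) G w else G (if q \<in> {1..w} then w + 1 else w))"
proof -
  let ?zz = "if q \<in> z_raise_set x y z then z + 1 else z"
  let ?ww = "if q \<in> {1..w} then w + 1 else w"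
  have bound: "F (insert_pos x q) (insert_pos y q) \<le> G ww + H zz"
    if "zz \<in> {z, z + 1}" "q \<noteq> x \<Longrightarrow> zz = ?zz" "ww \<in> {w, w + 1}" "q \<noteq> n \<Longrightarrow> ww = ?ww" for zz ww
    using hyp coupled_positions_insert[OF c q that] by blast
  have zw: "0 < n - 1" "z \<le> n - 1" "w \<le> n - 1" "x \<noteq> n"
    using c by (auto simp: coupled_positions_def)
  consider "q = x" | "q = n" | "q \<noteq> x" "q \<noteq> n" by blast
  then show ?thesis
  proof cases
    case 1
    have "F (insert_pos x q) (insert_pos y q)
        \<le> (real z * H (z + 1) + real (n - 1 - z) * H z) / real (n - 1) + G ?ww"
      by (rule le_convex_combination)
         (use 1 bound[of "z + 1" ?ww] bound[of z ?ww] zw in \<open>auto simp: add.commute\<close>)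
    then show ?thesis using 1 zw by (simp add: insert_avg_eq)
  next
    case 2
    have "F (insert_pos x q) (insert_pos y q)
        \<le> (real w * G (w + 1) + real (n - 1 - w) * G w) / real (n - 1) + H ?zz"
      by (rule le_convex_combination) (use 2 bound[of ?zz "w + 1"] bound[of ?zz w] zw in auto)
    then show ?thesis using 2 zw by (simp add: insert_avg_eq add.commute)
  next
    case 3
    then show ?thesis using bound[of ?zz ?ww] by (simp add: add.commute)
  qed
qed

lemma insertion_coupling:
  assumes c: "coupled_positions (n - 1) x y z w"
    and hyp: "\<And>x y z w. coupled_positions n x y z w \<Longrightarrow> F x y \<le> G w + H z"
  shows "(\<Sum>q\<in>{1..n}. F (insert_pos x q) (insert_pos y q)) \<le>
    real n * (insert_avg (n - 1) H z + insert_avg (n - 1) G w)"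
proof -
  let ?avg_H = "insert_avg (n - 1) H z" and ?avg_G = "insert_avg (n - 1) G w"
  let ?H_slot = "\<lambda>q. if q = x then ?avg_H else H (if q \<in> z_raise_set x y z then z + 1 else z)"
  let ?G_slot = "\<lambda>q. if q = n then ?avg_G else G (if q \<in> {1..w} then w + 1 else w)"
  have n: "1 \<le> n - 1" "x \<in> {1..n}" "z \<le> n - 1" "w \<le> n - 1" "{1..w} \<subseteq> {1..n} - {n}"
    using c by (auto simp: coupled_positions_def)
  have avg_H: "real z * H (z + 1) + real (n - 1 - z) * H z = real (n - 1) * ?avg_H"
    using insert_avg_eq[OF n(3), of H] n(1) by simp
  have avg_G: "real w * G (w + 1) + real (n - 1 - w) * G w = real (n - 1) * ?avg_G"
    using insert_avg_eq[OF n(4), of G] n(1) by simp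
  have sum_H: "(\<Sum>q\<in>{1..n}. ?H_slot q) = real n * ?avg_H"
    using sum_if_eq_if_mem[OF _ n(2) card_z_raise_set(1)[OF c], of ?avg_H H "z + 1" z]
      card_z_raise_set(2)[OF c] avg_H n(1)
    by (simp add: of_nat_diff algebra_simps)
  have sum_G: "(\<Sum>q\<in>{1..n}. ?G_slot q) = real n * ?avg_G"
    using sum_if_eq_if_mem[of "{1..n}" n "{1..w}" ?avg_G G "w + 1" w] avg_G n
    by (simp add: of_nat_diff algebra_simps)
  have "(\<Sum>q\<in>{1..n}. F (insert_pos x q) (insert_pos y q)) \<le> (\<Sum>q\<in>{1..n}. ?H_slot q + ?G_slot q)"
    by (rule sum_mono) (rule insertion_coupling_pointwise[OF c _ hyp])
  then show ?thesis
    by (simp only: sum.distrib sum_H sum_G distrib_left)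
qed

lemma pair_prob_coupling:
  assumes base: "\<And>x y z w. coupled_positions n x y z w \<Longrightarrow> P x y \<Longrightarrow> Pw w \<or> Pz z"
  shows "coupled_positions n x y z w \<Longrightarrow>
    pair_prob n P t x y \<le> single_prob (n - 1) Pw t w + single_prob (n - 1) Pz t z"
proof (induction t arbitrary: x y z w)
  case 0
  then show ?case using base[OF 0] by (auto simp: single_prob_0)
next
  case (Suc t)
  let ?P = "{1..n} - {x, y}"
  let ?Kz = "insert_avg (n - 1) (single_prob (n - 1) Pz t)"
  let ?Kw = "insert_avg (n - 1) (single_prob (n - 1) Pw t)"
  let ?z' = "\<lambda>p. if p \<in> z_drop_set x y z then z - 1 else z"
  let ?w' = "\<lambda>p. if p \<in> w_drop_set x y w then w - 1 else w"
  have c: "1 \<le> x" "x < y" "y \<le> n" "z \<in> {1..n - 1}" "w \<in> {1..n - 1}"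
    using Suc.prems by (auto simp: coupled_positions_def)
  have card_P: "card ?P = n - 2" using c by (simp add: card_Diff_subset)
  show ?case
  proof (cases "n = 2")
    case True
    then have "?P = {}" using c by auto
    then have "pair_prob n P (Suc t) x y = 0"
      unfolding pair_prob.simps by simp
    moreover have "0 \<le> single_prob (n - 1) Pw (Suc t) w + single_prob (n - 1) Pz (Suc t) z"
      unfolding single_prob_def by (intro add_nonneg_nonneg pair_prob_nonneg)
    ultimately show ?thesis by linarith
  next
    case False
    then have n: "real (n - 2) > 0" using c by simp
    have step: "(\<Sum>q\<in>{1..n}. pair_prob n P t (move_pos x p q) (move_pos y p q))
        \<le> real n * (?Kz (?z' p) + ?Kw (?w' p))" if "p \<in> ?P" for p
      unfolding move_pos_def
      by (rule insertion_coupling[OF coupled_positions_remove[OF Suc.prems that] Suc.IH])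
    have drop_z: "(\<Sum>p\<in>?P. ?Kz (?z' p)) = real (n - 2) * single_prob (n - 1) Pz (Suc t) z"
      using single_prob_Suc_eq[OF c(4), of Pz t] sum_z_drop[OF Suc.prems, of ?Kz]
      by (simp add: numeral_2_eq_2 algebra_simps)
    have drop_w: "(\<Sum>p\<in>?P. ?Kw (?w' p)) = real (n - 2) * single_prob (n - 1) Pw (Suc t) w"
      using single_prob_Suc_eq[OF c(5), of Pw t] sum_w_drop[OF Suc.prems, of ?Kw]
      by (simp add: numeral_2_eq_2 algebra_simps)
    have "pair_prob n P (Suc t) x y =
        (\<Sum>p\<in>?P. \<Sum>q\<in>{1..n}. pair_prob n P t (move_pos x p q) (move_pos y p q))
          / (real (n - 2) * real n)"
      using card_P by simp
    also have "\<dots> \<le> (\<Sum>p\<in>?P. real n * (?Kz (?z' p) + ?Kw (?w' p))) / (real (n - 2) * real n)"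
      by (intro divide_right_mono sum_mono step) auto
    also have "\<dots> = ((\<Sum>p\<in>?P. ?Kz (?z' p)) + (\<Sum>p\<in>?P. ?Kw (?w' p))) / real (n - 2)"
      using c by (simp add: sum_distrib_left[symmetric] sum.distrib)
    also have "\<dots> = single_prob (n - 1) Pw (Suc t) w + single_prob (n - 1) Pz (Suc t) z"
      unfolding drop_z drop_w using n by (simp add: field_simps)
    finally show ?thesis .
  qed
qed

lemma coupled_positions_nbhd:
  assumes "coupled_positions n x y z w" and "y \<in> nbhd n j \<delta>" and "w \<le> r"
  shows "z \<in> nbhd n j (\<delta> + real r)"
  using assms by (auto simp: coupled_positions_def nbhd_def)

lemma exists_permutes_two_points:
  assumes "{i, j, a, b} \<subseteq> {1..n}" and "i \<noteq> j" and "a \<noteq> b"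
  shows "\<exists>\<sigma>. \<sigma> permutes {1..n} \<and> \<sigma> i = a \<and> \<sigma> j = b"
proof -
  define \<tau> where "\<tau> = Transposition.transpose i a"
  have "\<tau> j \<noteq> a" "\<tau> j \<in> {1..n}"
    using assms by (auto simp: \<tau>_def Transposition.transpose_def)
  then show ?thesis
    using assms
    by (intro exI[of _ "Transposition.transpose (\<tau> j) b \<circ> \<tau>"])
       (auto simp: \<tau>_def intro!: permutes_compose permutes_swap_id)
qed

theorem lemma6:
  fixes n i j m r t :: nat and \<delta> :: real
  assumes "i \<in> {1..n}" and "j \<in> {1..n}" and "i \<noteq> j"
    and "m \<in> {1..n-1}" and "\<delta> \<ge> 0"
  shows "Pcal n t i j 1 (m + 1) ({1..n} \<times> nbhd n j \<delta>)
     \<le> cond_shuffle_prob (n - 1) t id (\<lambda>\<pi>. \<pi> 1 > r) {1}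
      + cond_shuffle_prob (n - 1) t id (\<lambda>\<pi>. \<pi> m \<in> nbhd n j (\<delta> + real r)) {m}"
proof -
  define \<sigma> where "\<sigma> = start_perm n i j 1 (m + 1)"
  have \<sigma>: "\<sigma> permutes {1..n}" "\<sigma> i = 1" "\<sigma> j = m + 1"
    using someI_ex[OF exists_permutes_two_points[of i j 1 "m + 1" n]] assms
    by (auto simp: \<sigma>_def start_perm_def conj_commute)
  have "Pcal n t i j 1 (m + 1) ({1..n} \<times> nbhd n j \<delta>)
      = pair_prob n (\<lambda>x y. x \<in> {1..n} \<and> y \<in> nbhd n j \<delta>) t 1 (m + 1)"
    using cond_shuffle_prob_eq_pair_prob[OF _ \<sigma>(1), of i j t] assms \<sigma>
    by (simp add: Pcal_def \<sigma>_def)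
  also have "\<dots> \<le> single_prob (n - 1) (\<lambda>v. r < v) t 1
      + single_prob (n - 1) (\<lambda>v. v \<in> nbhd n j (\<delta> + real r)) t m"
  proof (rule pair_prob_coupling)
    show "coupled_positions n 1 (m + 1) m 1"
      using assms by (auto simp: coupled_positions_def)
    show "r < w \<or> z \<in> nbhd n j (\<delta> + real r)"
      if "coupled_positions n x y z w" and "x \<in> {1..n} \<and> y \<in> nbhd n j \<delta>" for x y z w
      using coupled_positions_nbhd[OF that(1)] that(2) by (meson not_less)
  qed
  also have "\<dots> = cond_shuffle_prob (n - 1) t id (\<lambda>\<pi>. \<pi> 1 > r) {1}
      + cond_shuffle_prob (n - 1) t id (\<lambda>\<pi>. \<pi> m \<in> nbhd n j (\<delta> + real r)) {m}"
    using assms cond_shuffle_prob_eq_single_prob[of 1 "n - 1" id t "\<lambda>v. r < v"]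
      cond_shuffle_prob_eq_single_prob[of m "n - 1" id t "\<lambda>v. v \<in> nbhd n j (\<delta> + real r)"]
    by simp
  finally show ?thesis .
qed

end
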